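(* Let $N>2$ be an odd positive integer with smallest prime factor $p$, and let $K\ge N$ be an integer. Let $a_2,a_1\in\mathbb{Z}_N$ with $\gcd(a_2,N)=1$, and let $f:\mathbb{Z}_N\to\mathbb{Z}_K$ be defined by $f(x)=\phi(a_2x^2+a_1x)$, where $\phi:\mathbb{Z}_N\to\mathbb{Z}_K$ sends the class of $y\in\{0,\dots,N-1\}$ to the class of $y$ modulo $K$. For $0\le k<N$ let $\mathbf{a}_k=(a_k(0),\dots,a_k(K-1))$ with $a_k(t)=\omega_K^{tf(k)}$. Let $\mathbf{h}_0,\dots,\mathbf{h}_{N-1}$ be unimodular complex sequences of length $N$ such that for all $0\le i\ne j<N$ and all $0\le v<N$, $$\Big|\sum_{n=0}^{N-1}h_i(n)h_j^*(n)\Big|\le 1,\qquad \Big|\sum_{n=0}^{N-1}h_i(n)h_j^*(n)\omega_N^{nv}\Big|<N.$$ For $0\le i<N$ define $\mathbf{s}_i$ of length $NK$ by $s_i(tN+k)=h_i(k)a_k(t)$ ($0\le t<K$, $0\le k<N$) and let $\mathcal{S}=\{\mathbf{s}_0,\dots,\mathbf{s}_{N-1}\}$. Then $\mathcal{S}$ is an aperiodic $(N,NK,\Pi,K+p-1)$-LAZ sequence set, where (1) $\Pi=(-p,p)\times(-N,N)$ if $K=N$; (2) $\Pi=(-p,p)\times(-K+N-1,K-N+1)$ if $N<K<2N-1$; (3) $\Pi=(-p,p)\times(-K,K)$ if $K\ge 2N-1$.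
   Context: $\omega_L=e^{2\pi\sqrt{-1}/L}$, $z^*$ is complex conjugation, unimodular means all entries have modulus 1. For sequences $\mathbf{a},\mathbf{b}$ of length $L$, the aperiodic cross-ambiguity function is $\hat{AF}_{\mathbf{a},\mathbf{b}}(\tau,v)=\sum_{t=0}^{L-1-\tau}a(t)b^*(t+\tau)\omega_L^{vt}$ for $0\le\tau\le L-1$, $\hat{AF}_{\mathbf{a},\mathbf{b}}(\tau,v)=\sum_{t=-\tau}^{L-1}a(t)b^*(t+\tau)\omega_L^{vt}$ for $-L<\tau<0$, and $0$ for $|\tau|\ge L$; $\hat{AF}_{\mathbf{a}}=\hat{AF}_{\mathbf{a},\mathbf{a}}$. A set of $M$ sequences of length $L$ is an $(M,L,\Pi,\hat\theta)$-LAZ aperiodic sequence set if $|\hat{AF}_{\mathbf{a}}(\tau,v)|\le\hat\theta$ for all sequences $\mathbf{a}$ in the set and all integer $(0,0)\ne(\tau,v)\in\Pi$, and $|\hat{AF}_{\mathbf{a},\mathbf{b}}(\tau,v)|\le\hat\theta$ for all distinct $\mathbf{a},\mathbf{b}$ in the set and all integer $(\tau,v)\in\Pi$. *)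

theory Defs
  imports Complex_Main "HOL-Computational_Algebra.Primes"
begin

definition omega_pow :: "nat \<Rightarrow> int \<Rightarrow> complex" where
  "omega_pow L m = cis (2 * pi * real_of_int m / real L)"

text \<open>Aperiodic cross-ambiguity function of sequences a, b of length L
  (only the entries with index < L matter).\<close>
definition aperiodic_AF :: "(nat \<Rightarrow> complex) \<Rightarrow> (nat \<Rightarrow> complex) \<Rightarrow> nat \<Rightarrow> int \<Rightarrow> int \<Rightarrow> complex" where
  "aperiodic_AF a b L \<tau> v =
     (if 0 \<le> \<tau> \<and> \<tau> \<le> int L - 1 then
        (\<Sum>t\<in>{0..int L - 1 - \<tau>}. a (nat t) * cnj (b (nat (t + \<tau>))) * omega_pow L (v * t))
      else if - int L < \<tau> \<and> \<tau> < 0 then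
        (\<Sum>t\<in>{-\<tau>..int L - 1}. a (nat t) * cnj (b (nat (t + \<tau>))) * omega_pow L (v * t))
      else 0)"

definition is_LAZ_aperiodic :: "nat \<Rightarrow> nat \<Rightarrow> (int \<times> int) set \<Rightarrow> real \<Rightarrow> (nat \<Rightarrow> nat \<Rightarrow> complex) \<Rightarrow> bool" where
  "is_LAZ_aperiodic M L Pi \<theta> s \<longleftrightarrow>
     (\<forall>i<M. \<forall>\<tau> v. (\<tau>, v) \<in> Pi \<and> (\<tau>, v) \<noteq> (0, 0) \<longrightarrow> cmod (aperiodic_AF (s i) (s i) L \<tau> v) \<le> \<theta>) \<and>
     (\<forall>i<M. \<forall>j<M. i \<noteq> j \<longrightarrow> (\<forall>\<tau> v. (\<tau>, v) \<in> Pi \<longrightarrow> cmod (aperiodic_AF (s i) (s j) L \<tau> v) \<le> \<theta>))"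

end

theory Submission
  imports Defs
begin

text \<open>
  Index the entries of the sequences of length \<open>N K\<close> as \<open>t N + k\<close> with \<open>t < K\<close>, \<open>k < N\<close>.
  For a delay \<open>0 \<le> \<tau> < N\<close> the partner index \<open>t N + k + \<tau>\<close> equals \<open>(t + c) N + r\<close> with
  \<open>r = (k + \<tau>) mod N\<close> and carry \<open>c = (k + \<tau>) div N \<in> {0, 1}\<close>. Hence the ambiguity function
  splits into \<open>N\<close> columns, column \<open>k\<close> being a unimodular factor times the geometric sum of
  \<open>K - c\<close> powers of \<open>\<omega>\<^sub>K\<^bsup>f k - f r + v\<^esup>\<close>. That sum has modulus at most \<open>K\<close> if \<open>K\<close> divides the
  exponent and at most \<open>c\<close> otherwise, and the carries add up to \<open>\<tau>\<close>.

  For the quadratic phase, \<open>f k - f r \<equiv> -(2 a\<^sub>2 \<tau> k + a\<^sub>2 \<tau>\<^sup>2 + a\<^sub>1 \<tau>) (mod N)\<close>, and the shape of the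
  Doppler window turns divisibility by \<open>K\<close> of two such exponents into a congruence mod \<open>N\<close>.
  Since \<open>2 a\<^sub>2 \<tau>\<close> is a unit mod \<open>N\<close> when \<open>0 < \<tau> < p\<close>, at most one column reaches \<open>K\<close>, so the
  modulus is at most \<open>K + \<tau> \<le> K + p - 1\<close>. Negative delays follow by conjugate symmetry; at
  zero delay a full period kills \<open>v \<noteq> 0\<close>, and \<open>v = 0\<close> leaves \<open>K\<close> times the correlation of the \<open>h\<close>.
\<close>

section \<open>Powers of the root of unity\<close>

lemma omega_pow_add: "omega_pow L (a + b) = omega_pow L a * omega_pow L b"
  by (simp add: omega_pow_def cis_mult add_divide_distrib distrib_left)

lemma cnj_omega_pow: "cnj (omega_pow L m) = omega_pow L (- m)"
  by (simp add: omega_pow_def cis_cnj)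

lemma norm_omega_pow [simp]: "cmod (omega_pow L m) = 1"
  by (simp add: omega_pow_def)

lemma omega_pow_0 [simp]: "omega_pow L 0 = 1"
  by (simp add: omega_pow_def)

lemma omega_pow_mult_nat: "omega_pow L (int t * e) = omega_pow L e ^ t"
  by (simp add: omega_pow_def DeMoivre algebra_simps)

lemma omega_pow_mult_length: "N > 0 \<Longrightarrow> omega_pow (N * K) (x * int N) = omega_pow K x"
  by (simp add: omega_pow_def field_simps)

lemma omega_pow_eq_1_iff:
  assumes "L > 0"
  shows "omega_pow L m = 1 \<longleftrightarrow> int L dvd m"
proof
  assume "omega_pow L m = 1"
  then have "cos (2 * pi * real_of_int m / real L) = 1"
    unfolding omega_pow_def by (metis cis.sel(1) one_complex.sel(1))
  then obtain n where "2 * pi * real_of_int m / real L = real_of_int n * 2 * pi"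
    using cos_one_2pi_int by blast
  then have "real_of_int m = real_of_int (n * int L)"
    using assms by (simp add: field_simps)
  then have "m = n * int L"
    by (simp only: of_int_eq_iff)
  then show "int L dvd m"
    by simp
next
  assume "int L dvd m"
  then obtain n where "m = int L * n" ..
  then have "2 * pi * real_of_int m / real L = 2 * pi * real_of_int n"
    using assms by simp
  then show "omega_pow L m = 1"
    unfolding omega_pow_def by simp
qed

lemma sum_omega_pow_period:
  assumes "L > 0" "\<not> int L dvd e"
  shows "(\<Sum>t<L. omega_pow L (int t * e)) = 0"
proof -
  have "omega_pow L e \<noteq> 1" "omega_pow L e ^ L = 1"
    using assms omega_pow_eq_1_iff[of L e] omega_pow_eq_1_iff[of L "int L * e"]
    by (simp_all flip: omega_pow_mult_nat)
  then show ?thesis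
    by (simp add: omega_pow_mult_nat sum_gp_strict)
qed

lemma norm_sum_omega_pow_le: "cmod (\<Sum>t<n. omega_pow L (int t * e)) \<le> n"
  using norm_sum[of "\<lambda>t. omega_pow L (int t * e)" "{..<n}"] by simp

lemma norm_sum_omega_pow_le_diff:
  assumes "n \<le> L" "\<not> int L dvd e"
  shows "cmod (\<Sum>t<n. omega_pow L (int t * e)) \<le> L - n"
proof (cases "L = 0")
  case False
  have "(\<Sum>t<L. omega_pow L (int t * e))
      = (\<Sum>t<n. omega_pow L (int t * e)) + (\<Sum>t\<in>{n..<L}. omega_pow L (int t * e))"
    using assms(1) by (simp add: lessThan_atLeast0 sum.atLeastLessThan_concat)
  then have "(\<Sum>t<n. omega_pow L (int t * e)) = - (\<Sum>t\<in>{n..<L}. omega_pow L (int t * e))"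
    using False assms sum_omega_pow_period[of L e] by (simp add: eq_neg_iff_add_eq_0)
  then have "cmod (\<Sum>t<n. omega_pow L (int t * e)) \<le> (\<Sum>t\<in>{n..<L}. cmod (omega_pow L (int t * e)))"
    by (simp only: norm_minus_cancel norm_sum)
  then show ?thesis by simp
qed (use assms in simp)

lemma norm_sum_omega_pow_truncated_le:
  assumes "c \<le> L"
  shows "cmod (\<Sum>t<L - c. omega_pow L (int t * e)) \<le> (if int L dvd e then real L else 0) + c"
proof (cases "int L dvd e")
  case True
  then show ?thesis
    using norm_sum_omega_pow_le[of L e "L - c"] by simp
next
  case False
  then show ?thesis
    using norm_sum_omega_pow_le_diff[of "L - c" L e] assms by simp
qed

section \<open>The aperiodic ambiguity function\<close>

lemma aperiodic_AF_nonneg_shift: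
  assumes "\<tau> < L"
  shows "aperiodic_AF a b L (int \<tau>) v = (\<Sum>m<L - \<tau>. a m * cnj (b (m + \<tau>)) * omega_pow L (v * int m))"
proof -
  have "aperiodic_AF a b L (int \<tau>) v
      = (\<Sum>t\<in>{0..int (L - \<tau>) - 1}. a (nat t) * cnj (b (nat (t + int \<tau>))) * omega_pow L (v * t))"
    using assms by (simp add: aperiodic_AF_def of_nat_diff algebra_simps)
  also have "\<dots> = (\<Sum>m<L - \<tau>. a m * cnj (b (m + \<tau>)) * omega_pow L (v * int m))"
    by (rule sum.reindex_bij_witness[of _ int nat]) (auto simp: nat_add_distrib)
  finally show ?thesis .
qed

lemma aperiodic_AF_neg_shift:
  assumes "0 < \<sigma>" "\<sigma> < L"
  shows "aperiodic_AF a b L (- int \<sigma>) v = omega_pow L (v * int \<sigma>) * cnj (aperiodic_AF b a L (int \<sigma>) (- v))"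
proof -
  have "omega_pow L (v * int \<sigma>) * cnj (aperiodic_AF b a L (int \<sigma>) (- v))
      = (\<Sum>u\<in>{0..int L - 1 - int \<sigma>}. omega_pow L (v * int \<sigma>) * (cnj (b (nat u)) * a (nat (u + int \<sigma>)) * omega_pow L (v * u)))"
    using assms by (simp add: aperiodic_AF_def cnj_sum sum_distrib_left cnj_omega_pow)
  also have "\<dots> = (\<Sum>t\<in>{int \<sigma>..int L - 1}. a (nat t) * cnj (b (nat (t - int \<sigma>))) * omega_pow L (v * t))"
    by (rule sum.reindex_bij_witness[of _ "\<lambda>t. t - int \<sigma>" "\<lambda>u. u + int \<sigma>"])
      (auto simp: distrib_left omega_pow_add mult_ac)
  finally show ?thesis
    using assms by (simp add: aperiodic_AF_def)
qed

section \<open>Interleaved sequences\<close>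

lemma sum_lessThan_mult_blocks: "(\<Sum>m<K * N. g m) = (\<Sum>t<K. \<Sum>k<N. g (t * N + k))" for K N :: nat
proof -
  have "(\<Sum>k<N. g (t * N + k)) = (\<Sum>m\<in>{t * N..<t * N + N}. g m)" for t
    by (rule sum.reindex_bij_witness[of _ "\<lambda>m. m - t * N" "\<lambda>k. t * N + k"]) auto
  then show ?thesis
    by (simp add: sum.nat_group)
qed

lemma sum_lessThan_diff_columns:
  fixes N K \<tau> :: nat
  assumes "\<tau> < N" "K > 0"
  shows "(\<Sum>m<N * K - \<tau>. g m) = (\<Sum>k<N. \<Sum>t<K - (k + \<tau>) div N. g (t * N + k))"
proof -
  have in_range: "t * N + k < N * K - \<tau> \<longleftrightarrow> t < K - (k + \<tau>) div N" for t k
  proof -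
    have "0 < N" "N \<le> N * K"
      using assms by simp_all
    then have "t * N + k < N * K - \<tau> \<longleftrightarrow> t * N + (k + \<tau>) < K * N"
      using assms(1) by (auto simp: mult.commute)
    also have "\<dots> \<longleftrightarrow> (t * N + (k + \<tau>)) div N < K"
      by (rule div_less_iff_less_mult[OF \<open>0 < N\<close>, symmetric])
    also have "(t * N + (k + \<tau>)) div N = t + (k + \<tau>) div N"
      using assms(1) by simp
    finally show ?thesis
      by linarith
  qed
  have "(\<Sum>m<N * K - \<tau>. g m) = (\<Sum>m<K * N. if m < N * K - \<tau> then g m else 0)"
    by (intro sum.mono_neutral_cong_left) (auto simp: mult.commute)
  also have "\<dots> = (\<Sum>k<N. \<Sum>t<K. if t < K - (k + \<tau>) div N then g (t * N + k) else 0)"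
    by (simp add: sum_lessThan_mult_blocks in_range sum.swap[of _ "{..<K}"])
  also have "\<dots> = (\<Sum>k<N. \<Sum>t<K - (k + \<tau>) div N. g (t * N + k))"
    by (intro sum.cong sum.mono_neutral_cong_right) auto
  finally show ?thesis .
qed

lemma aperiodic_AF_interleaved:
  assumes "N > 0" "K > 0" "\<tau> < N"
    and x: "\<And>t k. t < K \<Longrightarrow> k < N \<Longrightarrow> x (t * N + k) = hx k * omega_pow K (int t * f k)"
    and y: "\<And>t k. t < K \<Longrightarrow> k < N \<Longrightarrow> y (t * N + k) = hy k * omega_pow K (int t * f k)"
  shows "aperiodic_AF x y (N * K) (int \<tau>) v =
    (\<Sum>k<N. hx k * cnj (hy ((k + \<tau>) mod N))
       * omega_pow K (- int ((k + \<tau>) div N) * f ((k + \<tau>) mod N)) * omega_pow (N * K) (v * int k)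
       * (\<Sum>t<K - (k + \<tau>) div N. omega_pow K (int t * (f k - f ((k + \<tau>) mod N) + v))))"
proof -
  define c where "c k = (k + \<tau>) div N" for k
  define r where "r k = (k + \<tau>) mod N" for k
  define G where "G m = x m * cnj (y (m + \<tau>)) * omega_pow (N * K) (v * int m)" for m
  have column: "G (t * N + k) = hx k * cnj (hy (r k)) * omega_pow K (- int (c k) * f (r k))
      * omega_pow (N * K) (v * int k) * omega_pow K (int t * (f k - f (r k) + v))"
    if "k < N" "t < K - c k" for t k
  proof -
    have "t * N + k + \<tau> = (t + c k) * N + r k"
      unfolding c_def r_def by (simp add: algebra_simps)
    then have "y (t * N + k + \<tau>) = hy (r k) * omega_pow K (int (t + c k) * f (r k))"
      using that y \<open>N > 0\<close> by (simp add: r_def)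
    moreover have "x (t * N + k) = hx k * omega_pow K (int t * f k)"
      using that x by simp
    moreover have "v * int (t * N + k) = int t * v * int N + v * int k"
      by (simp add: algebra_simps)
    then have "omega_pow (N * K) (v * int (t * N + k)) = omega_pow K (int t * v) * omega_pow (N * K) (v * int k)"
      by (simp only: omega_pow_add omega_pow_mult_length[OF \<open>N > 0\<close>])
    moreover have "omega_pow K (int t * f k) * cnj (omega_pow K (int (t + c k) * f (r k))) * omega_pow K (int t * v)
        = omega_pow K (- int (c k) * f (r k)) * omega_pow K (int t * (f k - f (r k) + v))"
      unfolding cnj_omega_pow omega_pow_add[symmetric] by (simp add: algebra_simps)
    ultimately show ?thesis
      unfolding G_def by (simp add: ac_simps)
  qed
  have "aperiodic_AF x y (N * K) (int \<tau>) v = (\<Sum>m<N * K - \<tau>. G m)"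
    unfolding G_def using assms(2,3) by (intro aperiodic_AF_nonneg_shift) (simp add: less_le_trans)
  also have "\<dots> = (\<Sum>k<N. \<Sum>t<K - c k. G (t * N + k))"
    unfolding c_def using assms(3,2) by (rule sum_lessThan_diff_columns)
  also have "\<dots> = (\<Sum>k<N. hx k * cnj (hy (r k)) * omega_pow K (- int (c k) * f (r k))
      * omega_pow (N * K) (v * int k) * (\<Sum>t<K - c k. omega_pow K (int t * (f k - f (r k) + v))))"
    by (simp add: column sum_distrib_left)
  finally show ?thesis
    unfolding c_def r_def .
qed

lemma sum_lessThan_add_div_eq:
  fixes \<tau> N :: nat
  assumes "\<tau> \<le> N"
  shows "(\<Sum>k<N. (k + \<tau>) div N) = \<tau>"
proof -
  have "(k + \<tau>) div N = (if N - \<tau> \<le> k then 1 else 0)" if "k < N" for k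
    using that assms by (auto simp: div_if le_div_geq)
  then have "(\<Sum>k<N. (k + \<tau>) div N) = card ({..<N} \<inter> {k. N - \<tau> \<le> k})"
    by (simp add: sum.If_cases)
  also have "{..<N} \<inter> {k. N - \<tau> \<le> k} = {N - \<tau>..<N}"
    by auto
  finally show ?thesis
    using assms by simp
qed

lemma norm_aperiodic_AF_interleaved_le:
  assumes "N > 0" "K > 0" "\<tau> < N"
    and x: "\<And>t k. t < K \<Longrightarrow> k < N \<Longrightarrow> x (t * N + k) = hx k * omega_pow K (int t * f k)"
    and y: "\<And>t k. t < K \<Longrightarrow> k < N \<Longrightarrow> y (t * N + k) = hy k * omega_pow K (int t * f k)"
    and hx: "\<And>k. k < N \<Longrightarrow> cmod (hx k) = 1"
    and hy: "\<And>k. k < N \<Longrightarrow> cmod (hy k) = 1"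
  shows "cmod (aperiodic_AF x y (N * K) (int \<tau>) v)
    \<le> real K * card {k. k < N \<and> int K dvd f k - f ((k + \<tau>) mod N) + v} + \<tau>"
proof -
  define c where "c k = (k + \<tau>) div N" for k
  define e where "e k = f k - f ((k + \<tau>) mod N) + v" for k
  define u where "u k = hx k * cnj (hy ((k + \<tau>) mod N))
    * omega_pow K (- int (c k) * f ((k + \<tau>) mod N)) * omega_pow (N * K) (v * int k)" for k
  have AF: "aperiodic_AF x y (N * K) (int \<tau>) v = (\<Sum>k<N. u k * (\<Sum>t<K - c k. omega_pow K (int t * e k)))"
    unfolding u_def c_def e_def by (rule aperiodic_AF_interleaved[OF assms(1-3) x y])
  have u: "cmod (u k) = 1" if "k < N" for k
    using that \<open>N > 0\<close> by (simp add: u_def norm_mult hx hy)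
  have carry_le: "c k \<le> K" if "k < N" for k
    using that \<open>\<tau> < N\<close> \<open>K > 0\<close> less_mult_imp_div_less[of "k + \<tau>" 2 N] by (simp add: c_def)
  have "cmod (aperiodic_AF x y (N * K) (int \<tau>) v) \<le> (\<Sum>k<N. cmod (u k * (\<Sum>t<K - c k. omega_pow K (int t * e k))))"
    unfolding AF by (rule norm_sum)
  also have "\<dots> = (\<Sum>k<N. cmod (\<Sum>t<K - c k. omega_pow K (int t * e k)))"
    by (intro sum.cong) (simp_all add: norm_mult u)
  also have "\<dots> \<le> (\<Sum>k<N. (if int K dvd e k then real K else 0) + c k)"
    by (intro sum_mono norm_sum_omega_pow_truncated_le carry_le) simp
  also have "\<dots> = real K * card {k. k < N \<and> int K dvd e k} + \<tau>"
    using sum_lessThan_add_div_eq[of \<tau> N] \<open>\<tau> < N\<close>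
    by (simp add: sum.distrib sum.If_cases c_def Int_def lessThan_def flip: of_nat_sum)
  finally show ?thesis
    unfolding e_def .
qed

lemma dvd_abs_less_imp_eq_0:
  fixes d i :: int
  shows "d dvd i \<Longrightarrow> \<bar>i\<bar> < \<bar>d\<bar> \<Longrightarrow> i = 0"
  using dvd_imp_le_int[of i d] by fastforce

lemma aperiodic_AF_interleaved_zero_shift:
  assumes "N > 0" "K > 0" "\<bar>v\<bar> < int K"
    and x: "\<And>t k. t < K \<Longrightarrow> k < N \<Longrightarrow> x (t * N + k) = hx k * omega_pow K (int t * f k)"
    and y: "\<And>t k. t < K \<Longrightarrow> k < N \<Longrightarrow> y (t * N + k) = hy k * omega_pow K (int t * f k)"
  shows "aperiodic_AF x y (N * K) 0 v = (if v = 0 then of_nat K * (\<Sum>k<N. hx k * cnj (hy k)) else 0)"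
proof -
  have "aperiodic_AF x y (N * K) 0 v
      = (\<Sum>k<N. hx k * cnj (hy k) * omega_pow (N * K) (v * int k)) * (\<Sum>t<K. omega_pow K (int t * v))"
    using aperiodic_AF_interleaved[OF assms(1,2) assms(1) x y, of v] by (simp add: sum_distrib_right)
  moreover have "\<not> int K dvd v" if "v \<noteq> 0"
    using that assms(3) dvd_abs_less_imp_eq_0[of "int K" v] by auto
  ultimately show ?thesis
    using sum_omega_pow_period[OF \<open>K > 0\<close>, of v] by auto
qed

section \<open>Quadratic phases\<close>

lemma coprime_if_abs_less_smallest_prime_factor:
  fixes \<tau> :: int
  assumes "\<forall>q. prime q \<and> q dvd N \<longrightarrow> p \<le> q" "\<tau> \<noteq> 0" "\<bar>\<tau>\<bar> < int p"
  shows "coprime \<tau> (int N)"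
proof (rule ccontr)
  assume "\<not> coprime \<tau> (int N)"
  then have "gcd (nat \<bar>\<tau>\<bar>) N \<noteq> 1"
    using coprime_int_iff[of "nat \<bar>\<tau>\<bar>" N] by (simp add: coprime_iff_gcd_eq_1)
  then obtain q where q: "prime q" "q dvd gcd (nat \<bar>\<tau>\<bar>) N"
    using prime_factor_nat by blast
  have "q dvd nat \<bar>\<tau>\<bar>" "q dvd N"
    using dvd_trans[OF q(2) gcd_dvd1] dvd_trans[OF q(2) gcd_dvd2] .
  then have "p \<le> q" "q \<le> nat \<bar>\<tau>\<bar>"
    using assms q(1) by (auto intro: dvd_imp_le)
  then show False
    using assms(3) by linarith
qed

lemma quadratic_difference_mod_inj:
  fixes a2 a1 \<tau> :: int and k1 k2 :: nat
  assumes "odd N" "coprime a2 (int N)" "coprime \<tau> (int N)" "k1 < N" "k2 < N"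
    and "(a2 * (int k1)\<^sup>2 + a1 * int k1 - (a2 * (int k1 + \<tau>)\<^sup>2 + a1 * (int k1 + \<tau>))) mod int N
       = (a2 * (int k2)\<^sup>2 + a1 * int k2 - (a2 * (int k2 + \<tau>)\<^sup>2 + a1 * (int k2 + \<tau>))) mod int N"
  shows "k1 = k2"
proof -
  have "int N dvd (2 * a2 * \<tau>) * (int k2 - int k1)"
    using assms(6) unfolding mod_eq_dvd_iff by (simp add: algebra_simps power2_eq_square)
  moreover have "coprime (int N) (2 * a2 * \<tau>)"
    using assms(1-3) by (simp add: ac_simps)
  ultimately have "int N dvd int k2 - int k1"
    by (simp add: coprime_dvd_mult_right_iff)
  moreover have "\<bar>int k2 - int k1\<bar> < \<bar>int N\<bar>"
    using assms(4,5) by auto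
  ultimately have "int k2 - int k1 = 0"
    by (rule dvd_abs_less_imp_eq_0)
  then show ?thesis
    by simp
qed

definition doppler_window :: "nat \<Rightarrow> nat \<Rightarrow> int set" where
  "doppler_window N K =
     (if K = N then {- int N <..< int N}
      else if K < 2 * N - 1 then {- int K + int N - 1 <..< int K - int N + 1}
      else {- int K <..< int K})"

lemma doppler_window_abs_less: "N \<le> K \<Longrightarrow> v \<in> doppler_window N K \<Longrightarrow> \<bar>v\<bar> < int K"
  by (auto simp: doppler_window_def split: if_splits)

lemma uminus_doppler_window: "v \<in> doppler_window N K \<Longrightarrow> - v \<in> doppler_window N K"
  by (auto simp: doppler_window_def split: if_splits)

lemma doppler_window_dvd_diff:
  assumes "N \<le> K" "v \<in> doppler_window N K" "\<bar>a\<bar> < int N" "\<bar>b\<bar> < int N"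
    and "int K dvd a + v" "int K dvd b + v"
  shows "int N dvd a - b"
proof -
  have "int K dvd a - b"
    using dvd_diff[OF assms(5,6)] by simp
  consider "K = N" | "\<bar>v\<bar> \<le> int K - int N" | "2 * N - 1 \<le> K"
    using assms(1,2) unfolding doppler_window_def by (cases "K = N"; cases "K < 2 * N - 1") auto
  then show ?thesis
  proof cases
    case 1
    then show ?thesis
      using \<open>int K dvd a - b\<close> by simp
  next
    case 2
    then have "\<bar>a + v\<bar> < \<bar>int K\<bar>" "\<bar>b + v\<bar> < \<bar>int K\<bar>"
      using assms(3,4) by auto
    then have "a + v = 0" "b + v = 0"
      using assms(5,6) by (simp_all add: dvd_abs_less_imp_eq_0)
    then have "a = b"
      by linarith
    then show ?thesis
      by simp
  next
    case 3
    then have "a - b = 0"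
      using assms(3,4) \<open>int K dvd a - b\<close> dvd_abs_less_imp_eq_0[of "int K" "a - b"] by linarith
    then show ?thesis
      by simp
  qed
qed

locale quadratic_phase =
  fixes N K :: nat and a2 a1 :: int and f :: "nat \<Rightarrow> int"
  assumes odd_N: "odd N" and N_le_K: "N \<le> K" and coprime_a2: "coprime a2 (int N)"
    and f_eq: "\<And>x. f x = (a2 * (int x)\<^sup>2 + a1 * int x) mod int N"
begin

lemma N_pos: "N > 0"
  using odd_N by (rule odd_pos)

lemma K_pos: "K > 0"
  using N_pos N_le_K by simp

lemma card_phase_matches_le_1:
  assumes "coprime (int \<tau>) (int N)" "v \<in> doppler_window N K"
  shows "card {k. k < N \<and> int K dvd f k - f ((k + \<tau>) mod N) + v} \<le> 1"
proof -
  define q where "q z = a2 * z\<^sup>2 + a1 * z" for z :: int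
  have f_q: "f x = q (int x) mod int N" for x
    by (simp add: f_eq q_def)
  have f_bounds: "0 \<le> f x" "f x < int N" for x
    using N_pos by (simp_all add: f_q)
  have f_diff: "\<bar>f a - f b\<bar> < int N" for a b
    unfolding abs_less_iff using f_bounds[of a] f_bounds[of b] by linarith
  have q_mod: "q (z mod int N) mod int N = q z mod int N" for z
  proof -
    have "a2 * (z mod int N)\<^sup>2 mod int N = a2 * z\<^sup>2 mod int N"
      by (metis mod_mult_right_eq power_mod)
    moreover have "a1 * (z mod int N) mod int N = a1 * z mod int N"
      by (rule mod_mult_right_eq)
    ultimately show ?thesis
      unfolding q_def by (rule mod_add_cong)
  qed
  have shift_mod: "f ((k + \<tau>) mod N) mod int N = q (int k + int \<tau>) mod int N" for k
    using q_mod[of "int k + int \<tau>"] by (simp add: f_q zmod_int)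
  have diff_mod: "(f k - f ((k + \<tau>) mod N)) mod int N = (q (int k) - q (int k + int \<tau>)) mod int N" for k
    by (metis mod_diff_eq shift_mod f_q mod_mod_trivial)
  have "k1 = k2"
    if "k1 < N" "int K dvd f k1 - f ((k1 + \<tau>) mod N) + v"
      and "k2 < N" "int K dvd f k2 - f ((k2 + \<tau>) mod N) + v" for k1 k2
  proof -
    have "int N dvd (f k1 - f ((k1 + \<tau>) mod N)) - (f k2 - f ((k2 + \<tau>) mod N))"
      using doppler_window_dvd_diff[OF N_le_K assms(2) f_diff f_diff] that(2,4) .
    then have "(q (int k1) - q (int k1 + int \<tau>)) mod int N = (q (int k2) - q (int k2 + int \<tau>)) mod int N"
      by (simp add: mod_eq_dvd_iff flip: diff_mod)
    then show "k1 = k2"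
      using quadratic_difference_mod_inj[OF odd_N coprime_a2 assms(1) that(1,3)] by (simp add: q_def)
  qed
  then show ?thesis
    by (auto simp: card_le_Suc0_iff_eq)
qed

lemma norm_aperiodic_AF_nonneg_shift_le:
  assumes "\<tau> < N" "coprime (int \<tau>) (int N)" "v \<in> doppler_window N K"
    and x: "\<And>t k. t < K \<Longrightarrow> k < N \<Longrightarrow> x (t * N + k) = hx k * omega_pow K (int t * f k)"
    and y: "\<And>t k. t < K \<Longrightarrow> k < N \<Longrightarrow> y (t * N + k) = hy k * omega_pow K (int t * f k)"
    and hx: "\<And>k. k < N \<Longrightarrow> cmod (hx k) = 1"
    and hy: "\<And>k. k < N \<Longrightarrow> cmod (hy k) = 1"
  shows "cmod (aperiodic_AF x y (N * K) (int \<tau>) v) \<le> real K + real \<tau>"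
proof -
  have "real K * card {k. k < N \<and> int K dvd f k - f ((k + \<tau>) mod N) + v} \<le> real K * 1"
    using card_phase_matches_le_1[OF assms(2,3)] by (intro mult_left_mono) simp_all
  then show ?thesis
    using norm_aperiodic_AF_interleaved_le[OF N_pos K_pos assms(1) x y hx hy, of v] by simp
qed

lemma norm_aperiodic_AF_le:
  assumes "\<bar>\<tau>\<bar> < int N" "coprime \<tau> (int N)" "v \<in> doppler_window N K"
    and x: "\<And>t k. t < K \<Longrightarrow> k < N \<Longrightarrow> x (t * N + k) = hx k * omega_pow K (int t * f k)"
    and y: "\<And>t k. t < K \<Longrightarrow> k < N \<Longrightarrow> y (t * N + k) = hy k * omega_pow K (int t * f k)"
    and hx: "\<And>k. k < N \<Longrightarrow> cmod (hx k) = 1"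
    and hy: "\<And>k. k < N \<Longrightarrow> cmod (hy k) = 1"
  shows "cmod (aperiodic_AF x y (N * K) \<tau> v) \<le> real K + \<bar>\<tau>\<bar>"
proof (cases "\<tau> \<ge> 0")
  case True
  then obtain \<sigma> where "\<tau> = int \<sigma>"
    using nonneg_int_cases by blast
  then show ?thesis
    using norm_aperiodic_AF_nonneg_shift_le[OF _ _ assms(3) x y hx hy] assms(1,2) by simp
next
  case False
  then obtain \<sigma> where \<sigma>: "\<tau> = - int \<sigma>" "0 < \<sigma>"
    by (metis neg_int_cases not_le)
  have "\<sigma> < N * K"
    using assms(1) \<sigma> K_pos by (simp add: less_le_trans[of \<sigma> N])
  have "cmod (aperiodic_AF x y (N * K) \<tau> v) = cmod (aperiodic_AF y x (N * K) (int \<sigma>) (- v))"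
    unfolding \<sigma>(1) aperiodic_AF_neg_shift[OF \<sigma>(2) \<open>\<sigma> < N * K\<close>] by (simp add: norm_mult)
  also have "\<dots> \<le> real K + real \<sigma>"
    using norm_aperiodic_AF_nonneg_shift_le[OF _ _ uminus_doppler_window[OF assms(3)] y x hy hx]
      assms(1,2) \<sigma>(1) by simp
  finally show ?thesis
    using \<sigma>(1) by simp
qed

lemma norm_aperiodic_AF_le_smallest_prime_factor:
  assumes "prime p" "p dvd N" "\<forall>q. prime q \<and> q dvd N \<longrightarrow> p \<le> q"
    and "\<tau> \<noteq> 0" "\<bar>\<tau>\<bar> < int p" "v \<in> doppler_window N K"
    and x: "\<And>t k. t < K \<Longrightarrow> k < N \<Longrightarrow> x (t * N + k) = hx k * omega_pow K (int t * f k)"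
    and y: "\<And>t k. t < K \<Longrightarrow> k < N \<Longrightarrow> y (t * N + k) = hy k * omega_pow K (int t * f k)"
    and hx: "\<And>k. k < N \<Longrightarrow> cmod (hx k) = 1"
    and hy: "\<And>k. k < N \<Longrightarrow> cmod (hy k) = 1"
  shows "cmod (aperiodic_AF x y (N * K) \<tau> v) \<le> real K + real p - 1"
proof -
  have "p \<le> N"
    using assms(2) N_pos by (rule dvd_imp_le)
  then have "\<bar>\<tau>\<bar> < int N"
    using assms(5) by linarith
  moreover have "coprime \<tau> (int N)"
    using coprime_if_abs_less_smallest_prime_factor assms(3-5) by blast
  moreover have "real_of_int \<bar>\<tau>\<bar> \<le> real p - 1"
    using assms(5) of_int_le_iff[where 'a=real, of "\<bar>\<tau>\<bar>" "int p - 1"] by simp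
  ultimately show ?thesis
    using norm_aperiodic_AF_le[OF _ _ assms(6) x y hx hy] by fastforce
qed

end

theorem corollary2:
  fixes N K p :: nat and a2 a1 :: int
    and h :: "nat \<Rightarrow> nat \<Rightarrow> complex" and s :: "nat \<Rightarrow> nat \<Rightarrow> complex"
    and f :: "nat \<Rightarrow> int"
  assumes N_odd: "odd N" and N_gt: "N > 2"
    and p_prime: "prime p" and p_dvd: "p dvd N"
    and p_min: "\<forall>q. prime q \<and> q dvd N \<longrightarrow> p \<le> q"
    and K_ge: "K \<ge> N"
    and a2_cop: "coprime a2 (int N)"
    and f_def: "\<forall>x. f x = ((a2 * (int x)^2 + a1 * int x) mod int N) mod int K"
    and h_unimod: "\<forall>i<N. \<forall>n<N. cmod (h i n) = 1"
    and h_corr: "\<forall>i<N. \<forall>j<N. i \<noteq> j \<longrightarrow>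
                   cmod (\<Sum>n<N. h i n * cnj (h j n)) \<le> 1"
    and h_amb: "\<forall>i<N. \<forall>j<N. i \<noteq> j \<longrightarrow> (\<forall>v<N.
                   cmod (\<Sum>n<N. h i n * cnj (h j n) * omega_pow N (int n * int v)) < real N)"
    and s_def: "\<forall>i<N. \<forall>t<K. \<forall>k<N.
                   s i (t * N + k) = h i k * omega_pow K (int t * f k)"
  shows "is_LAZ_aperiodic N (N * K)
           (if K = N then {- int p <..< int p} \<times> {- int N <..< int N}
            else if K < 2 * N - 1 then {- int p <..< int p} \<times> {- int K + int N - 1 <..< int K - int N + 1}
            else {- int p <..< int p} \<times> {- int K <..< int K})
           (real K + real p - 1) s"
proof -
  have f_eq: "f x = (a2 * (int x)\<^sup>2 + a1 * int x) mod int N" for x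
    using f_def N_gt K_ge by (simp add: order_less_le_trans[OF pos_mod_bound])
  interpret quadratic_phase N K a2 a1 f
    using N_odd K_ge a2_cop f_eq by unfold_locales
  have s_eq: "\<And>t k. t < K \<Longrightarrow> k < N \<Longrightarrow> s i (t * N + k) = h i k * omega_pow K (int t * f k)" if "i < N" for i
    using s_def that by blast
  have h_norm: "\<And>k. k < N \<Longrightarrow> cmod (h i k) = 1" if "i < N" for i
    using h_unimod that by blast
  have bound: "cmod (aperiodic_AF (s i) (s j) (N * K) \<tau> v) \<le> real K + real p - 1"
    if "i < N" "j < N" "\<bar>\<tau>\<bar> < int p" "v \<in> doppler_window N K" "i \<noteq> j \<or> (\<tau>, v) \<noteq> (0, 0)"
    for i j \<tau> v
  proof (cases "\<tau> = 0")
    case True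
    have "real K * cmod (\<Sum>k<N. h i k * cnj (h j k)) \<le> real K" if "i \<noteq> j"
      using h_corr \<open>i < N\<close> \<open>j < N\<close> that by (intro mult_left_le) auto
    then show ?thesis
      using True that prime_gt_0_nat[OF p_prime] aperiodic_AF_interleaved_zero_shift[OF N_pos K_pos
          doppler_window_abs_less[OF K_ge that(4)] s_eq[OF that(1)] s_eq[OF that(2)]]
      by (auto simp: norm_mult)
  next
    case False
    then show ?thesis
      using norm_aperiodic_AF_le_smallest_prime_factor[OF p_prime p_dvd p_min False that(3,4)
          s_eq[OF that(1)] s_eq[OF that(2)] h_norm[OF that(1)] h_norm[OF that(2)]] by simp
  qed
  have Pi: "(if K = N then {- int p <..< int p} \<times> {- int N <..< int N}
      else if K < 2 * N - 1 then {- int p <..< int p} \<times> {- int K + int N - 1 <..< int K - int N + 1}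
      else {- int p <..< int p} \<times> {- int K <..< int K}) = {- int p <..< int p} \<times> doppler_window N K"
    by (simp add: doppler_window_def)
  show ?thesis
    unfolding is_LAZ_aperiodic_def Pi using bound by auto
qed

end
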